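(* Let $R$ be a valuation domain with quotient field $Q\neq R$, and let $A\subseteq J$ be $R$-submodules of $Q$. Suppose $J=\bigcup_{\nu<\omega_1} r_\nu^{-1}R=\bigcup_{\nu<\omega_1} s_\nu^{-1}R$, where $r_\nu,s_\nu\in R\setminus\{0\}$, $r_\mu\mid r_\nu$ and $s_\mu\mid s_\nu$ whenever $\mu<\nu<\omega_1$. Then the set $\{\delta<\omega_1 : \bigcap_{\sigma<\delta} r_\sigma A=\bigcap_{\sigma<\delta} s_\sigma A\}$ is a closed unbounded subset of $\omega_1$.
   Context: A subset $C\subseteq\omega_1$ is closed unbounded (a cub) if $\sup C=\omega_1$ and for every $Y\subseteq C$ with $\sup Y<\omega_1$ we have $\sup Y\in C$. *)

theory Defs
  imports "HOL-Library.Countable_Set"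
begin

definition subring :: "'k::field set \<Rightarrow> bool" where
  "subring R \<longleftrightarrow> 0 \<in> R \<and> 1 \<in> R \<and>
     (\<forall>x\<in>R. \<forall>y\<in>R. x + y \<in> R \<and> x - y \<in> R \<and> x * y \<in> R)"

definition quotient_field_of :: "'k::field set \<Rightarrow> bool" where
  "quotient_field_of R \<longleftrightarrow> subring R \<and>
     (\<forall>q. \<exists>a\<in>R. \<exists>b\<in>R. b \<noteq> 0 \<and> q = a / b)"

definition valuation_domain_in :: "'k::field set \<Rightarrow> bool" where
  "valuation_domain_in R \<longleftrightarrow> quotient_field_of R \<and>
     (\<forall>x. x \<noteq> 0 \<longrightarrow> x \<in> R \<or> inverse x \<in> R)"

definition rdvd :: "'k::field set \<Rightarrow> 'k \<Rightarrow> 'k \<Rightarrow> bool" where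
  "rdvd R a b \<longleftrightarrow> (\<exists>t\<in>R. b = a * t)"

definition rsubmodule :: "'k::field set \<Rightarrow> 'k set \<Rightarrow> bool" where
  "rsubmodule R M \<longleftrightarrow> 0 \<in> M \<and> (\<forall>x\<in>M. \<forall>y\<in>M. x + y \<in> M) \<and>
     (\<forall>r\<in>R. \<forall>x\<in>M. r * x \<in> M)"

definition smul_set :: "'k::times \<Rightarrow> 'k set \<Rightarrow> 'k set" where
  "smul_set r M = (\<lambda>m. r * m) ` M"

text \<open>A type of ordinals modelling omega_1: a well-ordered type which is
  uncountable but all of whose proper initial segments are countable.\<close>
definition is_omega1 :: "'w::wellorder itself \<Rightarrow> bool" where
  "is_omega1 _ \<longleftrightarrow> uncountable (UNIV :: 'w set) \<and> (\<forall>i::'w. countable {j. j < i})"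

definition osup :: "'w::wellorder set \<Rightarrow> 'w" where
  "osup Y = (LEAST b. \<forall>y\<in>Y. y \<le> b)"

text \<open>Closed unbounded subsets, as in the paper: sup C = omega_1, and for every
  Y \<subseteq> C with sup Y < omega_1 (i.e. Y bounded in omega_1) we have sup Y \<in> C.\<close>
definition cub :: "'w::wellorder set \<Rightarrow> bool" where
  "cub C \<longleftrightarrow> (\<forall>a. \<exists>c\<in>C. a < c) \<and>
     (\<forall>Y. Y \<subseteq> C \<and> (\<exists>b. \<forall>y\<in>Y. y \<le> b) \<longrightarrow> osup Y \<in> C)"

end

theory Submission
  imports Defs
begin

text \<open>The sets \<open>r\<^sub>\<sigma> A\<close> and \<open>s\<^sub>\<sigma> A\<close> decrease with \<open>\<sigma>\<close>, and since both sequences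
  generate the same \<open>J\<close>, every \<open>r\<^sub>\<mu>\<close> divides some \<open>s\<^sub>\<nu>\<close> and vice versa, so the two
  chains interleave. For arbitrary families the set of \<open>\<delta>\<close> where the intersections
  below \<open>\<delta>\<close> agree is closed: below a limit of such \<open>\<delta>\<close> the intersection is the
  intersection of the intersections below them. For interleaving decreasing chains it is
  also unbounded: from any \<open>\<alpha>\<close> build an \<open>\<omega>\<close>-sequence in which each term lies beyond
  an interleaving index of the previous one; its supremum, which exists because
  countable subsets of \<open>\<omega>\<^sub>1\<close> are bounded, is an agreement point.\<close>

lemma osup_upper:
  assumes "\<forall>y\<in>Y. y \<le> b" and "y \<in> Y"
  shows "y \<le> osup Y"
proof -
  have "\<forall>y\<in>Y. y \<le> osup Y"
    unfolding osup_def by (rule LeastI[of _ b]) (use assms(1) in auto)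
  with assms(2) show ?thesis by blast
qed

lemma osup_least: "\<forall>y\<in>Y. y \<le> z \<Longrightarrow> osup Y \<le> z"
  unfolding osup_def by (rule Least_le)

lemma less_osup_iff:
  assumes "\<forall>y\<in>Y. y \<le> b" and "osup Y \<notin> Y"
  shows "\<sigma> < osup Y \<longleftrightarrow> (\<exists>y\<in>Y. \<sigma> < y)"
proof
  assume "\<sigma> < osup Y"
  show "\<exists>y\<in>Y. \<sigma> < y"
  proof (rule ccontr)
    assume "\<not> (\<exists>y\<in>Y. \<sigma> < y)"
    then have "osup Y \<le> \<sigma>" by (auto simp: not_less intro: osup_least)
    with \<open>\<sigma> < osup Y\<close> show False by simp
  qed
next
  assume "\<exists>y\<in>Y. \<sigma> < y"
  then show "\<sigma> < osup Y"
    using osup_upper[OF assms(1)] assms(2) by (metis order.strict_trans2)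
qed

lemma is_omega1_countable_bounded:
  assumes "is_omega1 TYPE('w::wellorder)" and "countable (Y::'w set)"
  shows "\<exists>b. \<forall>y\<in>Y. y < b"
proof -
  have "countable {j. j \<le> i}" for i :: 'w
  proof -
    have "{j. j \<le> i} = insert i {j. j < i}" by auto
    then show ?thesis using assms(1) unfolding is_omega1_def by simp
  qed
  then have "countable (\<Union>y\<in>Y. {j. j \<le> y})" using assms(2) by blast
  moreover have "uncountable (UNIV :: 'w set)" using assms(1) unfolding is_omega1_def by simp
  ultimately have "(\<Union>y\<in>Y. {j. j \<le> y}) \<noteq> UNIV" by metis
  then obtain b where "b \<notin> (\<Union>y\<in>Y. {j. j \<le> y})" by blast
  then show ?thesis by (auto simp: not_le)
qed

definition agree_below :: "('w::wellorder \<Rightarrow> 'a set) \<Rightarrow> ('w \<Rightarrow> 'a set) \<Rightarrow> 'w set" where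
  "agree_below F G = {\<delta>. (\<Inter>\<sigma>\<in>{\<sigma>. \<sigma> < \<delta>}. F \<sigma>) = (\<Inter>\<sigma>\<in>{\<sigma>. \<sigma> < \<delta>}. G \<sigma>)}"

lemma osup_mem_agree_below:
  fixes F G :: "'w::wellorder \<Rightarrow> 'a set"
  assumes Y: "Y \<subseteq> agree_below F G" and bounded: "\<forall>y\<in>Y. y \<le> b"
  shows "osup Y \<in> agree_below F G"
proof (cases "osup Y \<in> Y")
  case True
  with Y show ?thesis by blast
next
  case False
  have "{\<sigma>. \<sigma> < osup Y} = (\<Union>y\<in>Y. {\<sigma>. \<sigma> < y})"
    using less_osup_iff[OF bounded False] by blast
  then have Inter_osup: "(\<Inter>\<sigma>\<in>{\<sigma>. \<sigma> < osup Y}. H \<sigma>) = (\<Inter>y\<in>Y. \<Inter>\<sigma>\<in>{\<sigma>. \<sigma> < y}. H \<sigma>)"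
    for H :: "'w \<Rightarrow> 'a set"
    by auto
  have agree: "(\<Inter>\<sigma>\<in>{\<sigma>. \<sigma> < y}. F \<sigma>) = (\<Inter>\<sigma>\<in>{\<sigma>. \<sigma> < y}. G \<sigma>)" if "y \<in> Y" for y
    using Y that unfolding agree_below_def by blast
  have "(\<Inter>y\<in>Y. \<Inter>\<sigma>\<in>{\<sigma>. \<sigma> < y}. F \<sigma>) = (\<Inter>y\<in>Y. \<Inter>\<sigma>\<in>{\<sigma>. \<sigma> < y}. G \<sigma>)"
    by (intro INF_cong refl agree)
  then show ?thesis unfolding agree_below_def mem_Collect_eq Inter_osup .
qed

lemma agree_below_unbounded:
  fixes F G :: "'w::wellorder \<Rightarrow> 'a set"
  assumes omega1: "is_omega1 TYPE('w)"
    and "antimono F" and "antimono G"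
    and F_G: "\<And>x. \<exists>\<nu>. F \<nu> \<subseteq> G x" and G_F: "\<And>x. \<exists>\<nu>. G \<nu> \<subseteq> F x"
  shows "\<exists>c\<in>agree_below F G. a < c"
proof -
  have "\<exists>\<nu>. x < \<nu> \<and> F \<nu> \<subseteq> G x \<and> G \<nu> \<subseteq> F x" for x
  proof -
    obtain \<nu>\<^sub>1 \<nu>\<^sub>2 where \<nu>: "F \<nu>\<^sub>1 \<subseteq> G x" "G \<nu>\<^sub>2 \<subseteq> F x" using F_G G_F by blast
    obtain b where b: "x < b" "\<nu>\<^sub>1 \<le> b" "\<nu>\<^sub>2 \<le> b"
      using is_omega1_countable_bounded[OF omega1, of "{x, \<nu>\<^sub>1, \<nu>\<^sub>2}"] by auto
    have "F b \<subseteq> F \<nu>\<^sub>1" "G b \<subseteq> G \<nu>\<^sub>2"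
      using antimonoD[OF \<open>antimono F\<close> b(2)] antimonoD[OF \<open>antimono G\<close> b(3)] by auto
    with \<nu> b(1) show ?thesis by blast
  qed
  then have "\<exists>h. \<forall>x. x < h x \<and> F (h x) \<subseteq> G x \<and> G (h x) \<subseteq> F x"
    by (intro choice allI)
  then obtain h where h: "\<And>x. x < h x" "\<And>x. F (h x) \<subseteq> G x" "\<And>x. G (h x) \<subseteq> F x"
    by blast
  define f where "f n = (h ^^ n) a" for n
  have f_Suc: "f (Suc n) = h (f n)" for n unfolding f_def by simp
  obtain b where "\<forall>y\<in>range f. y < b"
    using is_omega1_countable_bounded[OF omega1, of "range f"] by auto
  then have bounded: "\<forall>y\<in>range f. y \<le> b" using less_imp_le by blast
  define d where "d = osup (range f)"
  have "d \<notin> range f"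
  proof
    assume "d \<in> range f"
    then obtain n where "d = f n" by blast
    moreover have "f (Suc n) \<le> d" unfolding d_def by (rule osup_upper[OF bounded]) simp
    ultimately show False using h(1)[of "f n"] f_Suc by simp
  qed
  then have less_d: "\<sigma> < d \<longleftrightarrow> (\<exists>n. \<sigma> < f n)" for \<sigma>
    using less_osup_iff[OF bounded] unfolding d_def by simp
  have f_less_d: "f n < d" for n
    unfolding less_d by (intro exI[of _ "Suc n"]) (simp add: f_Suc h(1))
  have interleaved: "\<exists>\<nu><d. F \<nu> \<subseteq> G \<sigma> \<and> G \<nu> \<subseteq> F \<sigma>" if less: "\<sigma> < d" for \<sigma>
  proof -
    obtain n where "\<sigma> < f n" using less unfolding less_d ..
    then have "F (f n) \<subseteq> F \<sigma>" "G (f n) \<subseteq> G \<sigma>"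
      using antimonoD[OF \<open>antimono F\<close>] antimonoD[OF \<open>antimono G\<close>] by simp_all
    moreover have "F (f (Suc n)) \<subseteq> G (f n)" "G (f (Suc n)) \<subseteq> F (f n)"
      unfolding f_Suc by (fact h(2,3))+
    ultimately show ?thesis using f_less_d[of "Suc n"] by blast
  qed
  have "(\<Inter>\<sigma>\<in>{\<sigma>. \<sigma> < d}. F \<sigma>) \<subseteq> (\<Inter>\<sigma>\<in>{\<sigma>. \<sigma> < d}. G \<sigma>)"
    "(\<Inter>\<sigma>\<in>{\<sigma>. \<sigma> < d}. G \<sigma>) \<subseteq> (\<Inter>\<sigma>\<in>{\<sigma>. \<sigma> < d}. F \<sigma>)"
    using interleaved by fast+
  then have "d \<in> agree_below F G" unfolding agree_below_def by simp
  moreover have "a < d" using f_less_d[of 0] by (simp add: f_def)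
  ultimately show ?thesis by blast
qed

lemma cub_agree_below:
  fixes F G :: "'w::wellorder \<Rightarrow> 'a set"
  assumes "is_omega1 TYPE('w)" and "antimono F" and "antimono G"
    and "\<And>x. \<exists>\<nu>. F \<nu> \<subseteq> G x" and "\<And>x. \<exists>\<nu>. G \<nu> \<subseteq> F x"
  shows "cub (agree_below F G)"
  unfolding cub_def
proof (intro conjI allI impI)
  show "\<exists>c\<in>agree_below F G. a < c" for a
    by (rule agree_below_unbounded[OF assms])
  show "osup Y \<in> agree_below F G" if "Y \<subseteq> agree_below F G \<and> (\<exists>b. \<forall>y\<in>Y. y \<le> b)" for Y
    using that osup_mem_agree_below by blast
qed

lemma smul_set_subset_if_rdvd:
  assumes "rsubmodule R A" and "rdvd R a b"
  shows "smul_set b A \<subseteq> smul_set a A"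
proof
  fix x assume "x \<in> smul_set b A"
  then obtain m where m: "m \<in> A" "x = b * m" unfolding smul_set_def by auto
  obtain t where t: "t \<in> R" "b = a * t" using assms(2) unfolding rdvd_def by auto
  have "t * m \<in> A" using assms(1) t m unfolding rsubmodule_def by auto
  moreover have "x = a * (t * m)" using m t by (simp add: mult.assoc)
  ultimately show "x \<in> smul_set a A" unfolding smul_set_def by auto
qed

lemma antimono_smul_set_if_rdvd_chain:
  assumes "rsubmodule R A" and "\<And>\<mu> \<nu>. \<mu> < \<nu> \<Longrightarrow> rdvd R (r \<mu>) (r \<nu>)"
  shows "antimono (\<lambda>\<sigma>::'w::linorder. smul_set (r \<sigma>) A)"
proof
  fix \<mu> \<nu> :: 'w
  assume "\<mu> \<le> \<nu>"
  then show "smul_set (r \<nu>) A \<subseteq> smul_set (r \<mu>) A"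
    using assms(2)[of \<mu> \<nu>] smul_set_subset_if_rdvd[OF assms(1)] by (cases "\<mu> = \<nu>") auto
qed

lemma rdvd_if_inverse_in_smul_set:
  assumes "inverse a \<in> smul_set (inverse b) R" and "a \<noteq> 0" and "b \<noteq> 0"
  shows "rdvd R a (b::'k::field)"
proof -
  obtain t where "t \<in> R" "inverse a = inverse b * t" using assms(1) unfolding smul_set_def by auto
  with assms(2,3) have "t \<in> R" "b = a * t" by (auto simp: field_simps)
  then show ?thesis unfolding rdvd_def by blast
qed

lemma rdvd_of_same_union:
  assumes "subring R" and "\<And>\<nu>. r \<nu> \<noteq> 0" and "\<And>\<nu>. s \<nu> \<noteq> 0"
    and "(\<Union>\<nu>. smul_set (inverse (r \<nu>)) R) = (\<Union>\<nu>. smul_set (inverse (s \<nu>)) R)"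
  shows "\<exists>\<nu>. rdvd R (r \<mu>) (s \<nu>)"
proof -
  have "1 \<in> R" using assms(1) unfolding subring_def by simp
  then have "inverse (r \<mu>) \<in> (\<Union>\<nu>. smul_set (inverse (r \<nu>)) R)" unfolding smul_set_def by force
  then obtain \<nu> where "inverse (r \<mu>) \<in> smul_set (inverse (s \<nu>)) R" using assms(4) by auto
  then show ?thesis using rdvd_if_inverse_in_smul_set assms(2,3) by blast
qed

theorem lemma2:
  fixes R A J :: "'k::field set"
    and r s :: "'w::wellorder \<Rightarrow> 'k"
  assumes "is_omega1 TYPE('w)"
    and "valuation_domain_in R"
    and "R \<noteq> UNIV"
    and "rsubmodule R A" and "rsubmodule R J" and "A \<subseteq> J"
    and "\<And>\<nu>. r \<nu> \<in> R - {0}" and "\<And>\<nu>. s \<nu> \<in> R - {0}"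
    and "\<And>\<mu> \<nu>. \<mu> < \<nu> \<Longrightarrow> rdvd R (r \<mu>) (r \<nu>)"
    and "\<And>\<mu> \<nu>. \<mu> < \<nu> \<Longrightarrow> rdvd R (s \<mu>) (s \<nu>)"
    and "J = (\<Union>\<nu>. smul_set (inverse (r \<nu>)) R)"
    and "J = (\<Union>\<nu>. smul_set (inverse (s \<nu>)) R)"
  shows "cub {\<delta>. (\<Inter>\<sigma>\<in>{\<sigma>. \<sigma> < \<delta>}. smul_set (r \<sigma>) A)
                = (\<Inter>\<sigma>\<in>{\<sigma>. \<sigma> < \<delta>}. smul_set (s \<sigma>) A)}"
proof -
  have "subring R"
    using assms(2) unfolding valuation_domain_in_def quotient_field_of_def by simp
  have nonzero: "r \<nu> \<noteq> 0" "s \<nu> \<noteq> 0" for \<nu>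
    using assms(7,8) by auto
  have same_union: "(\<Union>\<nu>. smul_set (inverse (r \<nu>)) R) = (\<Union>\<nu>. smul_set (inverse (s \<nu>)) R)"
    using assms(11,12) by simp
  have r_s: "\<exists>\<nu>. smul_set (s \<nu>) A \<subseteq> smul_set (r \<mu>) A" for \<mu>
    using rdvd_of_same_union[OF \<open>subring R\<close> nonzero same_union]
      smul_set_subset_if_rdvd[OF assms(4)] by blast
  have s_r: "\<exists>\<nu>. smul_set (r \<nu>) A \<subseteq> smul_set (s \<mu>) A" for \<mu>
    using rdvd_of_same_union[OF \<open>subring R\<close> nonzero(2,1) same_union[symmetric]]
      smul_set_subset_if_rdvd[OF assms(4)] by blast
  have "cub (agree_below (\<lambda>\<sigma>. smul_set (r \<sigma>) A) (\<lambda>\<sigma>. smul_set (s \<sigma>) A))"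
    by (rule cub_agree_below[OF assms(1) antimono_smul_set_if_rdvd_chain[OF assms(4,9)]
          antimono_smul_set_if_rdvd_chain[OF assms(4,10)] s_r r_s])
  then show ?thesis unfolding agree_below_def .
qed

end
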